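(* For every $n\ge1$, $$\tilde A_n(p,q)=\sum_{j=0}^{\lfloor n/2\rfloor}c_{n,j}(p+q)^j(1+pq)^{\lfloor n/2\rfloor-j},$$ where $c_{n,j}$ is the number of permutations $\pi\in\mathfrak S_n$ with $\mathrm{odes}(\pi)=j$ and $\mathrm{edes}(\pi)=0$ (so $A_n(p,0)=\sum_j c_{n,j}p^j$), and $c_{n,j}$ is a positive integer for every $0\le j\le\lfloor n/2\rfloor$.
   Context: For a permutation $\pi=a_1\cdots a_n$ of $[n]$, an index $i\in[n-1]$ is a descent if $a_i>a_{i+1}$; $\mathrm{odes}(\pi)$ and $\mathrm{edes}(\pi)$ count descents at odd and even positions. $A_n(p,q)=\sum_{\pi\in\mathfrak S_n}p^{\mathrm{odes}(\pi)}q^{\mathrm{edes}(\pi)}$. $\tilde A_n(p,q)=A_n(p,q)$ if $n$ is odd and $\tilde A_n(p,q)=(1+q)A_n(p,q)$ if $n$ is even. *)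

theory Defs
  imports "HOL-Combinatorics.Combinatorics"
begin

text \<open>Permutations of [n] are represented as lists a_1 ... a_n (one-line notation),
  i.e. the elements of permutations_of_set {1..n}. Positions are 1-indexed:
  index i (1 \<le> i \<le> n-1) is a descent iff a_i > a_(i+1), i.e. xs!(i-1) > xs!i.\<close>

definition descents :: "nat list \<Rightarrow> nat set" where
  "descents xs = {i. 1 \<le> i \<and> i < length xs \<and> xs ! (i - 1) > xs ! i}"

definition odes :: "nat list \<Rightarrow> nat" where
  "odes xs = card {i \<in> descents xs. odd i}"

definition edes :: "nat list \<Rightarrow> nat" where
  "edes xs = card {i \<in> descents xs. even i}"

definition A_poly :: "nat \<Rightarrow> 'a::comm_ring_1 \<Rightarrow> 'a \<Rightarrow> 'a" where
  "A_poly n p q = (\<Sum>xs\<in>permutations_of_set {1..n}. p ^ odes xs * q ^ edes xs)"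

definition A_tilde :: "nat \<Rightarrow> 'a::comm_ring_1 \<Rightarrow> 'a \<Rightarrow> 'a" where
  "A_tilde n p q = (if odd n then A_poly n p q else (1 + q) * A_poly n p q)"

definition c_coef :: "nat \<Rightarrow> nat \<Rightarrow> nat" where
  "c_coef n j = card {xs \<in> permutations_of_set {1..n}. odes xs = j \<and> edes xs = 0}"

end

theory Submission
  imports Defs "HOL-Computational_Algebra.Polynomial"
begin

text \<open>Let F(n,v) be the descent generating function of the permutations of [n] ending in v.
  Appending a new last letter v (and raising the old letters \<open>\<ge> v\<close> by one) creates a descent at
  position n exactly when v does not exceed the old last letter, so F(n+1,-) arises from F(n,-)
  by a triangular kernel with weight p for odd and q for even n; hence A_n is the all-ones vector
  pushed backwards through these kernels. Grouping an odd step with the following even one, the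
  vector R of length 2k+1 keeps the symmetric shape
    R(z) = G_z + (1+q) H_z,   R(2k+2-z) = G_z + p(1+q) H_z   (z \<open>\<le>\<close> k),   R(k+1) = G_(k+1),
  where G_z and H_z are integer combinations of the products (p+q)^j (1+pq)^(N-j) whose
  coefficients do not depend on p and q. At length one this expresses the tilde-polynomial in that
  basis, and putting q = 0 identifies the coefficients as c_(n,j). Positivity is witnessed by the
  permutation 2 1 4 3 ... (2j) (2j-1) (2j+1) ... n.\<close>

section \<open>Expansions in powers of \<open>p+q\<close> and \<open>1+pq\<close>\<close>

definition gamma_expansion :: "nat \<Rightarrow> (nat \<Rightarrow> int) \<Rightarrow> 'a::comm_ring_1 \<Rightarrow> 'a \<Rightarrow> 'a" where
  "gamma_expansion L g p q = (\<Sum>j<L. of_int (g j) * (p+q)^j * (1+p*q)^(L-1-j))"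

definition shift_coeffs :: "(nat \<Rightarrow> int) \<Rightarrow> nat \<Rightarrow> int" where
  "shift_coeffs g j = (if j = 0 then 0 else g (j-1))"

definition trunc_coeffs :: "nat \<Rightarrow> (nat \<Rightarrow> int) \<Rightarrow> nat \<Rightarrow> int" where
  "trunc_coeffs L g j = (if j < L then g j else 0)"

lemma gamma_expansion_0: "gamma_expansion 0 g p q = 0"
  by (simp add: gamma_expansion_def)

lemma gamma_expansion_1: "gamma_expansion (Suc 0) g p q = of_int (g 0)"
  by (simp add: gamma_expansion_def)

lemma gamma_expansion_2:
  "gamma_expansion (Suc (Suc 0)) g p q = of_int (g 0) * (1+p*q) + of_int (g 1) * (p+q)"
  by (simp add: gamma_expansion_def numeral_2_eq_2 lessThan_Suc)

lemma gamma_expansion_times_1_plus_pq: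
  "(1+p*q) * gamma_expansion L g p q = gamma_expansion (Suc L) (trunc_coeffs L g) p q"
proof -
  have "gamma_expansion (Suc L) (trunc_coeffs L g) p q
      = (\<Sum>j<L. of_int (g j) * (p+q)^j * (1+p*q)^(L-j))"
    unfolding gamma_expansion_def trunc_coeffs_def by (simp add: sum.lessThan_Suc)
  also have "\<dots> = (\<Sum>j<L. (1+p*q) * (of_int (g j) * (p+q)^j * (1+p*q)^(L-1-j)))"
  proof (rule sum.cong)
    fix j assume "j \<in> {..<L}"
    then have "L - j = Suc (L-1-j)" by simp
    then show "of_int (g j) * (p+q)^j * (1+p*q)^(L-j)
        = (1+p*q) * (of_int (g j) * (p+q)^j * (1+p*q)^(L-1-j))"
      by (simp add: mult_ac)
  qed simp
  finally show ?thesis by (simp add: gamma_expansion_def sum_distrib_left)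
qed

lemma gamma_expansion_times_p_plus_q:
  "(p+q) * gamma_expansion L g p q = gamma_expansion (Suc L) (shift_coeffs g) p q"
proof -
  have "gamma_expansion (Suc L) (shift_coeffs g) p q
      = (\<Sum>j<L. of_int (g j) * (p+q)^(Suc j) * (1+p*q)^(L-1-j))"
    unfolding gamma_expansion_def shift_coeffs_def
    by (subst sum.lessThan_Suc_shift) (simp add: mult_ac)
  then show ?thesis by (simp add: gamma_expansion_def sum_distrib_left mult_ac)
qed

lemma gamma_expansion_add:
  "gamma_expansion L (\<lambda>j. f j + g j) p q = gamma_expansion L f p q + gamma_expansion L g p q"
  by (simp add: gamma_expansion_def sum.distrib algebra_simps)

lemma gamma_expansion_scale:
  "gamma_expansion L (\<lambda>j. c * g j) p q = of_int c * gamma_expansion L g p q"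
  by (simp add: gamma_expansion_def sum_distrib_left mult_ac)

lemma gamma_expansion_zero: "gamma_expansion L (\<lambda>j. 0) p q = 0"
  by (simp add: gamma_expansion_def)

lemma gamma_expansion_sum:
  "gamma_expansion L (\<lambda>j. \<Sum>z\<in>S. f z j) p q = (\<Sum>z\<in>S. gamma_expansion L (f z) p q)"
  unfolding gamma_expansion_def by (simp add: sum_distrib_right sum.swap[of _ S])

text \<open>\<open>step_kernel (2k) x z\<close> is the weight of passing from last letter \<open>x\<close> at length \<open>2k-1\<close>,
  via some last letter \<open>y\<close> at length \<open>2k\<close>, to last letter \<open>z\<close> at length \<open>2k+1\<close>.\<close>

definition step_kernel :: "nat \<Rightarrow> nat \<Rightarrow> nat \<Rightarrow> 'a::comm_ring_1 \<Rightarrow> 'a \<Rightarrow> 'a" where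
  "step_kernel M x z p q = (\<Sum>y=1..M. (if y \<le> x then p else 1) * (if z \<le> y then q else 1))"

lemma sum_atLeastAtMost_const:
  "(\<And>y. a \<le> y \<Longrightarrow> y \<le> b \<Longrightarrow> f y = c) \<Longrightarrow> (\<Sum>y=a..b. f y) = of_nat (Suc b - a) * c"
  by (simp add: sum.cong[of "{a..b}" "{a..b}" f "\<lambda>_. c"])

lemma step_kernel_le:
  assumes "1 \<le> z" "z \<le> x" "x \<le> M"
  shows "step_kernel M x z p q = of_nat (z-1) * p + of_nat (x-z+1) * (p*q) + of_nat (M-x) * q"
proof -
  obtain z0 where z: "z = Suc z0" using assms by (cases z) auto
  obtain a where x: "x = Suc z0 + a" using assms z by (metis le_Suc_ex)
  obtain c where M: "M = Suc z0 + a + c" using assms x by (metis le_Suc_ex)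
  let ?f = "\<lambda>y. (if y \<le> x then p else 1) * (if z \<le> y then q else 1)"
  have "step_kernel M x z p q =
      sum ?f {1..z0} + sum ?f {z0+1..z0 + Suc a} + sum ?f {z0 + Suc a+1..z0 + Suc a + c}"
    unfolding step_kernel_def M add_Suc_shift
    by (simp only: sum.ub_add_nat[of 1 "z0 + Suc a" _ c] sum.ub_add_nat[of 1 "z0" _ "Suc a"]
        le_add2 add_0 le_SucI le0 Suc_eq_plus1[symmetric])
  moreover have "sum ?f {1..z0} = of_nat z0 * p"
    by (subst sum_atLeastAtMost_const[where c=p]) (auto simp: z x)
  moreover have "sum ?f {z0+1..z0 + Suc a} = of_nat (Suc a) * (p*q)"
    by (subst sum_atLeastAtMost_const[where c="p*q"]) (auto simp: z x)
  moreover have "sum ?f {z0 + Suc a+1..z0 + Suc a + c} = of_nat c * q"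
    by (subst sum_atLeastAtMost_const[where c=q]) (auto simp: z x)
  ultimately show ?thesis by (simp add: z x M)
qed

lemma step_kernel_gt:
  assumes "x < z" "z \<le> Suc M" "x \<le> M"
  shows "step_kernel M x z p q = of_nat x * p + of_nat (z-x-1) + of_nat (Suc M-z) * q"
proof -
  obtain a where z: "z = Suc x + a" using assms by (metis less_iff_Suc_add add.commute add_Suc)
  obtain c where M: "M = x + a + c" using assms z by (metis le_Suc_ex add_Suc Suc_le_mono)
  let ?f = "\<lambda>y. (if y \<le> x then p else 1) * (if z \<le> y then q else 1)"
  have "step_kernel M x z p q = sum ?f {1..x} + sum ?f {x+1..x + a} + sum ?f {x + a+1..x + a + c}"
    unfolding step_kernel_def M
    by (simp only: sum.ub_add_nat[of 1 "x + a" _ c] sum.ub_add_nat[of 1 "x" _ "a"]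
        le_add2 le_SucI le0 Suc_eq_plus1[symmetric])
  moreover have "sum ?f {1..x} = of_nat x * p"
    by (subst sum_atLeastAtMost_const[where c=p]) (auto simp: z)
  moreover have "sum ?f {x+1..x + a} = of_nat a"
    by (subst sum_atLeastAtMost_const[where c=1]) (auto simp: z)
  moreover have "sum ?f {x + a+1..x + a + c} = of_nat c * q"
    by (subst sum_atLeastAtMost_const[where c=q]) (auto simp: z)
  ultimately show ?thesis by (simp add: z M)
qed

text \<open>The heart of the argument: on a mirrored pair of entries \<open>G + (1+q)H\<close>, \<open>G + p(1+q)H\<close>,
  the kernels at \<open>x\<close> and at \<open>2k-x\<close> produce the same combination of \<open>p+q\<close> and \<open>1+pq\<close>, plus
  \<open>1+q\<close> resp. \<open>p(1+q)\<close> times a common remainder. So the symmetric shape propagates.\<close>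

lemma step_kernel_pair_le:
  fixes G H p q :: "'a::comm_ring_1"
  assumes "1 \<le> z" "z \<le> x" "x \<le> k"
  shows "step_kernel (2*k) x z p q * (G + (1+q)*H) +
      step_kernel (2*k) x (2*k+2-z) p q * (G + p*(1+q)*H) =
    of_nat (x-z+1) * (1+p*q) * G + of_nat (x+z-1) * (p+q) * G +
    of_nat x * ((p+q)*((1+p*q)+(p+q))) * H +
    (1+q) * (of_nat (2*k-2*x) * G + of_nat (2*k-2*x) * (p+q) * H)"
      (is ?direct)
    and "step_kernel (2*k) (2*k-x) z p q * (G + (1+q)*H) +
      step_kernel (2*k) (2*k-x) (2*k+2-z) p q * (G + p*(1+q)*H) =
    of_nat (x-z+1) * (1+p*q) * G + of_nat (x+z-1) * (p+q) * G +
    of_nat x * ((p+q)*((1+p*q)+(p+q))) * H +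
    p*(1+q) * (of_nat (2*k-2*x) * G + of_nat (2*k-2*x) * (p+q) * H)"
      (is ?mirrored)
proof -
  obtain z0 where z: "z = Suc z0" using assms by (cases z) auto
  obtain a where x: "x = Suc z0 + a" using assms z by (metis le_Suc_ex)
  obtain b where k: "k = x + b" using assms by (metis le_Suc_ex)
  have w1: "step_kernel (2*k) x z p q =
      of_nat z0 * p + of_nat (Suc a) * (p*q) + of_nat (Suc z0 + a + 2*b) * q"
    by (subst step_kernel_le) (use assms in \<open>auto simp: z x k algebra_simps\<close>)
  have w2: "step_kernel (2*k) x (2*k+2-z) p q =
      of_nat x * p + of_nat (Suc a + 2*b) + of_nat z0 * q"
    by (subst step_kernel_gt) (use assms in \<open>auto simp: z x k algebra_simps\<close>)
  have w3: "step_kernel (2*k) (2*k-x) z p q =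
      of_nat z0 * p + of_nat (Suc (a+2*b)) * (p*q) + of_nat (Suc z0 + a) * q"
    by (subst step_kernel_le) (use assms in \<open>auto simp: z x k algebra_simps\<close>)
  have w4: "step_kernel (2*k) (2*k-x) (2*k+2-z) p q =
      of_nat (2*k-x) * p + of_nat (Suc a) + of_nat z0 * q"
    by (subst step_kernel_gt) (use assms in \<open>auto simp: z x k algebra_simps\<close>)
  have e1: "x-z+1 = Suc a" "x+z-1 = 2*z0 + Suc a" "2*k-2*x = 2*b" "2*k - x = Suc z0 + a + 2*b"
    by (auto simp: z x k)
  show ?direct unfolding w1 w2 unfolding e1 unfolding x by (simp add: algebra_simps)
  show ?mirrored unfolding w3 w4 unfolding e1 unfolding x by (simp add: algebra_simps)
qed

lemma step_kernel_pair_gt: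
  fixes G H p q :: "'a::comm_ring_1"
  assumes "x < z" "z \<le> k"
  shows "step_kernel (2*k) x z p q * (G + (1+q)*H) +
      step_kernel (2*k) x (2*k+2-z) p q * (G + p*(1+q)*H) =
    of_nat (2*x) * (p+q) * G + of_nat x * ((p+q)*((1+p*q)+(p+q))) * H +
    (1+q) * (of_nat (2*k-2*x) * G + of_nat (z-x-1) * (1+p*q) * H + of_nat (2*k+1-z-x) * (p+q) * H)"
      (is ?direct)
    and "step_kernel (2*k) (2*k-x) z p q * (G + (1+q)*H) +
      step_kernel (2*k) (2*k-x) (2*k+2-z) p q * (G + p*(1+q)*H) =
    of_nat (2*x) * (p+q) * G + of_nat x * ((p+q)*((1+p*q)+(p+q))) * H +
    p*(1+q) *
      (of_nat (2*k-2*x) * G + of_nat (z-x-1) * (1+p*q) * H + of_nat (2*k+1-z-x) * (p+q) * H)"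
      (is ?mirrored)
proof -
  obtain a where z: "z = Suc x + a" using assms by (metis less_iff_Suc_add add.commute add_Suc)
  obtain b where k: "k = z + b" using assms by (metis le_Suc_ex)
  have w1: "step_kernel (2*k) x z p q = of_nat x * p + of_nat a + of_nat (x+2+a+2*b) * q"
    by (subst step_kernel_gt) (use assms in \<open>auto simp: z k algebra_simps\<close>)
  have w2: "step_kernel (2*k) x (2*k+2-z) p q =
      of_nat x * p + of_nat (a+2*b+2) + of_nat (x + a) * q"
    by (subst step_kernel_gt) (use assms in \<open>auto simp: z k algebra_simps\<close>)
  have w3: "step_kernel (2*k) (2*k-x) z p q =
      of_nat (x+a) * p + of_nat (a + 2*b + 2) * (p*q) + of_nat x * q"
    by (subst step_kernel_le) (use assms in \<open>auto simp: z k algebra_simps\<close>)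
  have w4: "step_kernel (2*k) (2*k-x) (2*k+2-z) p q =
      of_nat (z+2*b+1) * p + of_nat a * (p*q) + of_nat x * q"
  proof (cases a)
    case 0
    then show ?thesis
      by (subst step_kernel_gt) (use assms in \<open>auto simp: z k algebra_simps\<close>)
  next
    case (Suc a1)
    then show ?thesis
      by (subst step_kernel_le) (use assms in \<open>auto simp: z k algebra_simps\<close>)
  qed
  have e1: "2*k-2*x = 2*(a+1+b)" "z-x-1 = a" "2*k+1-z-x = a+2*b+2"
    by (auto simp: z k)
  show ?direct unfolding w1 w2 unfolding e1 unfolding z by (simp add: algebra_simps)
  show ?mirrored unfolding w3 w4 unfolding e1 unfolding z by (simp add: algebra_simps)
qed

lemma step_kernel_middle:
  fixes G p q :: "'a::comm_ring_1"
  assumes "x \<le> k"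
  shows "step_kernel (2*k) x (Suc k) p q * G =
      of_nat x * (p+q) * G + (1+q) * (of_nat (k-x) * G)"
      (is ?direct)
    and "step_kernel (2*k) (2*k-x) (Suc k) p q * G =
      of_nat x * (p+q) * G + p*(1+q) * (of_nat (k-x) * G)"
      (is ?mirrored)
proof -
  obtain b where k: "k = x + b" using assms by (metis le_Suc_ex)
  have w1: "step_kernel (2*k) x (Suc k) p q = of_nat x * p + of_nat b + of_nat (x+b) * q"
    by (subst step_kernel_gt) (use assms in \<open>auto simp: k algebra_simps\<close>)
  have w2: "step_kernel (2*k) (2*k-x) (Suc k) p q =
      of_nat (x+b) * p + of_nat b * (p*q) + of_nat x * q"
  proof (cases b)
    case 0
    then show ?thesis
      by (subst step_kernel_gt) (use assms in \<open>auto simp: k algebra_simps\<close>)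
  next
    case (Suc b1)
    then show ?thesis
      by (subst step_kernel_le) (use assms in \<open>auto simp: k algebra_simps\<close>)
  qed
  show ?direct unfolding w1 by (simp add: k algebra_simps)
  show ?mirrored unfolding w2 by (simp add: k algebra_simps)
qed

definition double_step :: "nat \<Rightarrow> (nat \<Rightarrow> 'a::comm_ring_1) \<Rightarrow> nat \<Rightarrow> 'a \<Rightarrow> 'a \<Rightarrow> 'a" where
  "double_step k R x p q = (\<Sum>z=1..2*k+1. step_kernel (2*k) x z p q * R z)"

lemma double_step_scale: "double_step k (\<lambda>z. c * R z) x p q = c * double_step k R x p q"
  unfolding double_step_def sum_distrib_left by (intro sum.cong refl) (simp add: mult_ac)

lemma sum_fold_middle:
  "(\<Sum>z=1..2*k+1. f z) = (\<Sum>z=1..k. f z + f (2*k+2-z)) + f (Suc k)"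
proof -
  have "(\<Sum>z=1..2*k+1. f z) = (\<Sum>z=1..k+1. f z) + (\<Sum>z=k+1+1..k+1+k. f z)"
    using sum.ub_add_nat[of 1 "k+1" f k] by (simp add: mult_2 add_ac)
  also have "(\<Sum>z=k+1+1..k+1+k. f z) = (\<Sum>z=1..k. f (2*k+2-z))"
    by (rule sum.reindex_bij_witness[where i="\<lambda>z. 2*k+2-z" and j="\<lambda>z. 2*k+2-z"]) auto
  finally show ?thesis by (simp add: sum.distrib add_ac)
qed

lemma sum_split_at:
  fixes x k :: nat
  assumes "x \<le> k"
  shows "(\<Sum>z=1..k. f z) = (\<Sum>z=1..x. f z) + (\<Sum>z=x+1..k. f z)"
proof -
  obtain b where k: "k = x + b" using assms le_Suc_ex by blast
  show ?thesis unfolding k by (rule sum.ub_add_nat) simp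
qed

type_synonym coeff_family = "nat \<Rightarrow> nat \<Rightarrow> int"

definition symmetric_form ::
    "(nat \<Rightarrow> 'a::comm_ring_1) \<Rightarrow> nat \<Rightarrow> nat \<Rightarrow> coeff_family \<Rightarrow> coeff_family \<Rightarrow>
      'a \<Rightarrow> 'a \<Rightarrow> bool" where
  "symmetric_form R k N G H p q \<longleftrightarrow>
    (\<forall>z. 1 \<le> z \<and> z \<le> k \<longrightarrow>
      R z = gamma_expansion (Suc N) (G z) p q + (1+q) * gamma_expansion N (H z) p q \<and>
      R (2*k+2-z) = gamma_expansion (Suc N) (G z) p q + p*(1+q) * gamma_expansion N (H z) p q) \<and>
    R (Suc k) = gamma_expansion (Suc N) (G (Suc k)) p q"

text \<open>Coefficients after one double step, read off from the kernel identities.\<close>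

definition next_G_le :: "nat \<Rightarrow> coeff_family \<Rightarrow> coeff_family \<Rightarrow> nat \<Rightarrow> nat \<Rightarrow> nat \<Rightarrow> int" where
  "next_G_le N G H x z j =
    int (x-z+1) * trunc_coeffs (Suc N) (G z) j + int (x+z-1) * shift_coeffs (G z) j +
    int x * shift_coeffs (\<lambda>i. shift_coeffs (H z) i + trunc_coeffs N (H z) i) j"

definition next_G_gt :: "nat \<Rightarrow> coeff_family \<Rightarrow> coeff_family \<Rightarrow> nat \<Rightarrow> nat \<Rightarrow> nat \<Rightarrow> int" where
  "next_G_gt N G H x z j =
    int (2*x) * shift_coeffs (G z) j +
    int x * shift_coeffs (\<lambda>i. shift_coeffs (H z) i + trunc_coeffs N (H z) i) j"

definition next_H_le :: "nat \<Rightarrow> coeff_family \<Rightarrow> coeff_family \<Rightarrow> nat \<Rightarrow> nat \<Rightarrow> nat \<Rightarrow> int" where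
  "next_H_le k G H x z j = int (2*k-2*x) * G z j + int (2*k-2*x) * shift_coeffs (H z) j"

definition next_H_gt :: "nat \<Rightarrow> nat \<Rightarrow> coeff_family \<Rightarrow> coeff_family \<Rightarrow> nat \<Rightarrow> nat \<Rightarrow> nat \<Rightarrow> int" where
  "next_H_gt k N G H x z j =
    int (2*k-2*x) * G z j + int (z-x-1) * trunc_coeffs N (H z) j +
    int (2*k+1-z-x) * shift_coeffs (H z) j"

definition next_G :: "nat \<Rightarrow> nat \<Rightarrow> coeff_family \<Rightarrow> coeff_family \<Rightarrow> coeff_family" where
  "next_G k N G H x j =
    (\<Sum>z=1..x. next_G_le N G H x z j) + (\<Sum>z=x+1..k. next_G_gt N G H x z j) +
    int x * shift_coeffs (G (Suc k)) j"

definition next_H :: "nat \<Rightarrow> nat \<Rightarrow> coeff_family \<Rightarrow> coeff_family \<Rightarrow> coeff_family" where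
  "next_H k N G H x j =
    (\<Sum>z=1..x. next_H_le k G H x z j) + (\<Sum>z=x+1..k. next_H_gt k N G H x z j) +
    int (k-x) * G (Suc k) j"

lemma gamma_expansion_next_G_le:
  "gamma_expansion (Suc (Suc N)) (next_G_le N G H x z) p q =
    of_nat (x-z+1) * (1+p*q) * gamma_expansion (Suc N) (G z) p q +
    of_nat (x+z-1) * (p+q) * gamma_expansion (Suc N) (G z) p q +
    of_nat x * ((p+q)*((1+p*q)+(p+q))) * gamma_expansion N (H z) p q"
  unfolding next_G_le_def gamma_expansion_add gamma_expansion_scale
    gamma_expansion_times_p_plus_q[symmetric] gamma_expansion_times_1_plus_pq[symmetric]
  by (simp add: algebra_simps)

lemma gamma_expansion_next_G_gt:
  "gamma_expansion (Suc (Suc N)) (next_G_gt N G H x z) p q =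
    of_nat (2*x) * (p+q) * gamma_expansion (Suc N) (G z) p q +
    of_nat x * ((p+q)*((1+p*q)+(p+q))) * gamma_expansion N (H z) p q"
  unfolding next_G_gt_def gamma_expansion_add gamma_expansion_scale
    gamma_expansion_times_p_plus_q[symmetric] gamma_expansion_times_1_plus_pq[symmetric]
  by (simp add: algebra_simps)

lemma gamma_expansion_next_H_le:
  "gamma_expansion (Suc N) (next_H_le k G H x z) p q =
    of_nat (2*k-2*x) * gamma_expansion (Suc N) (G z) p q +
    of_nat (2*k-2*x) * (p+q) * gamma_expansion N (H z) p q"
  unfolding next_H_le_def gamma_expansion_add gamma_expansion_scale
    gamma_expansion_times_p_plus_q[symmetric]
  by (simp add: algebra_simps)

lemma gamma_expansion_next_H_gt:
  "gamma_expansion (Suc N) (next_H_gt k N G H x z) p q =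
    of_nat (2*k-2*x) * gamma_expansion (Suc N) (G z) p q +
    of_nat (z-x-1) * (1+p*q) * gamma_expansion N (H z) p q +
    of_nat (2*k+1-z-x) * (p+q) * gamma_expansion N (H z) p q"
  unfolding next_H_gt_def gamma_expansion_add gamma_expansion_scale
    gamma_expansion_times_p_plus_q[symmetric] gamma_expansion_times_1_plus_pq[symmetric]
  by (simp add: algebra_simps)

lemma gamma_expansion_next_G:
  "gamma_expansion (Suc (Suc N)) (next_G k N G H x) p q =
    (\<Sum>z=1..x. gamma_expansion (Suc (Suc N)) (next_G_le N G H x z) p q) +
    (\<Sum>z=x+1..k. gamma_expansion (Suc (Suc N)) (next_G_gt N G H x z) p q) +
    of_nat x * (p+q) * gamma_expansion (Suc N) (G (Suc k)) p q"
proof -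
  have "next_G k N G H x = (\<lambda>j. (\<lambda>j. (\<Sum>z=1..x. next_G_le N G H x z j) +
      (\<Sum>z=x+1..k. next_G_gt N G H x z j)) j + int x * shift_coeffs (G (Suc k)) j)"
    by (rule ext) (simp add: next_G_def)
  then show ?thesis
    by (simp only: gamma_expansion_add gamma_expansion_sum gamma_expansion_scale
        gamma_expansion_times_p_plus_q[symmetric]) (simp add: mult_ac)
qed

lemma gamma_expansion_next_H:
  "gamma_expansion (Suc N) (next_H k N G H x) p q =
    (\<Sum>z=1..x. gamma_expansion (Suc N) (next_H_le k G H x z) p q) +
    (\<Sum>z=x+1..k. gamma_expansion (Suc N) (next_H_gt k N G H x z) p q) +
    of_nat (k-x) * gamma_expansion (Suc N) (G (Suc k)) p q"
proof -
  have "next_H k N G H x = (\<lambda>j. (\<lambda>j. (\<Sum>z=1..x. next_H_le k G H x z j) +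
      (\<Sum>z=x+1..k. next_H_gt k N G H x z j)) j + int (k-x) * G (Suc k) j)"
    by (rule ext) (simp add: next_H_def)
  then show ?thesis
    by (simp only: gamma_expansion_add gamma_expansion_sum gamma_expansion_scale) simp
qed

lemma next_H_middle: "next_H k N G H k = (\<lambda>j. 0)"
  by (rule ext) (simp add: next_H_def next_H_le_def)

lemma double_step_symmetric:
  fixes R :: "nat \<Rightarrow> 'a::comm_ring_1"
  assumes R: "symmetric_form R k N G H p q" and x: "1 \<le> x" "x \<le> k"
    and u: "(u, c) \<in> {(x, 1+q), (2*k-x, p*(1+q))}"
  shows "double_step k R u p q =
    gamma_expansion (Suc (Suc N)) (next_G k N G H x) p q +
    c * gamma_expansion (Suc N) (next_H k N G H x) p q"
proof -
  let ?G = "\<lambda>z. gamma_expansion (Suc N) (G z) p q" and ?H = "\<lambda>z. gamma_expansion N (H z) p q"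
  let ?pair = "\<lambda>z. step_kernel (2*k) u z p q * R z +
    step_kernel (2*k) u (2*k+2-z) p q * R (2*k+2-z)"
  have R_pair: "R z = ?G z + (1+q) * ?H z" "R (2*k+2-z) = ?G z + p*(1+q) * ?H z"
    if "1 \<le> z" "z \<le> k" for z
    using R that unfolding symmetric_form_def by auto
  have "double_step k R u p q = (\<Sum>z=1..k. ?pair z) + step_kernel (2*k) u (Suc k) p q * R (Suc k)"
    unfolding double_step_def by (rule sum_fold_middle)
  also have "\<dots> = (\<Sum>z=1..x. ?pair z) + (\<Sum>z=x+1..k. ?pair z)
      + step_kernel (2*k) u (Suc k) p q * R (Suc k)"
    using sum_split_at[OF x(2)] by simp
  also have "(\<Sum>z=1..x. ?pair z) = (\<Sum>z=1..x.
      gamma_expansion (Suc (Suc N)) (next_G_le N G H x z) p q +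
      c * gamma_expansion (Suc N) (next_H_le k G H x z) p q)"
  proof (rule sum.cong)
    fix z assume z: "z \<in> {1..x}"
    then have "R z = ?G z + (1+q) * ?H z" "R (2*k+2-z) = ?G z + p*(1+q) * ?H z"
      using R_pair x by auto
    then show "?pair z = gamma_expansion (Suc (Suc N)) (next_G_le N G H x z) p q +
        c * gamma_expansion (Suc N) (next_H_le k G H x z) p q"
      unfolding gamma_expansion_next_G_le gamma_expansion_next_H_le
      using step_kernel_pair_le[of z x k p q "?G z" "?H z"] z x u by (auto simp: mult.assoc)
  qed simp
  also have "(\<Sum>z=x+1..k. ?pair z) = (\<Sum>z=x+1..k.
      gamma_expansion (Suc (Suc N)) (next_G_gt N G H x z) p q +
      c * gamma_expansion (Suc N) (next_H_gt k N G H x z) p q)"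
  proof (rule sum.cong)
    fix z assume z: "z \<in> {x+1..k}"
    then have "R z = ?G z + (1+q) * ?H z" "R (2*k+2-z) = ?G z + p*(1+q) * ?H z"
      using R_pair x by auto
    then show "?pair z = gamma_expansion (Suc (Suc N)) (next_G_gt N G H x z) p q +
        c * gamma_expansion (Suc N) (next_H_gt k N G H x z) p q"
      unfolding gamma_expansion_next_G_gt gamma_expansion_next_H_gt
      using step_kernel_pair_gt[of x z k p q "?G z" "?H z"] z x u by (auto simp: mult.assoc)
  qed simp
  also have "step_kernel (2*k) u (Suc k) p q * R (Suc k)
      = of_nat x * (p+q) * ?G (Suc k) + c * (of_nat (k-x) * ?G (Suc k))"
    using R step_kernel_middle[of x k p q "?G (Suc k)"] x u by (auto simp: symmetric_form_def)
  finally show ?thesis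
    unfolding gamma_expansion_next_G gamma_expansion_next_H
    by (simp add: sum.distrib sum_distrib_left algebra_simps)
qed

lemma symmetric_form_double_step:
  assumes R: "symmetric_form R k N G H p q" and k: "1 \<le> k"
  shows "symmetric_form (\<lambda>x. double_step k R x p q) (k-1) (Suc N)
    (next_G k N G H) (next_H k N G H) p q"
proof -
  have "2*(k-1)+2 = 2*k" "Suc (k-1) = k" using k by simp_all
  moreover have "double_step k R k p q = gamma_expansion (Suc (Suc N)) (next_G k N G H k) p q"
    using double_step_symmetric[OF R k order.refl, of k "1+q"]
    by (simp add: next_H_middle gamma_expansion_zero)
  ultimately show ?thesis
    unfolding symmetric_form_def using double_step_symmetric[OF R] by auto
qed

section \<open>The backward recursion\<close>

definition descent_weight :: "nat \<Rightarrow> 'a::comm_ring_1 \<Rightarrow> 'a \<Rightarrow> 'a" where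
  "descent_weight i p q = (if odd i then p else q)"

text \<open>\<open>transfer d i x p q\<close> sums the weights of the descents at positions \<open>i, \<dots>, i+d-1\<close> over
  all ways of extending a permutation of \<open>[i]\<close> that ends in \<open>x\<close> by \<open>d\<close> further letters.\<close>

fun transfer :: "nat \<Rightarrow> nat \<Rightarrow> nat \<Rightarrow> 'a::comm_ring_1 \<Rightarrow> 'a \<Rightarrow> 'a" where
  "transfer 0 i x p q = 1"
| "transfer (Suc d) i x p q =
    (\<Sum>y=1..Suc i. (if y \<le> x then descent_weight i p q else 1) * transfer d (Suc i) y p q)"

lemma transfer_1_odd:
  assumes "odd i" "z \<le> Suc i"
  shows "transfer (Suc 0) i z p q = of_nat z * p + of_nat (Suc i - z)"
proof -
  have "descent_weight i p q = p" using assms(1) by (simp add: descent_weight_def)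
  then have "transfer (Suc 0) i z p q = (\<Sum>y=1..Suc i. if y \<le> z then p else 1)"
    by (simp only: transfer.simps mult_1_right)
  also have "\<dots> = step_kernel (Suc i) z (Suc (Suc i)) p 1"
    unfolding step_kernel_def by (simp only: if_cancel mult_1_right)
  also have "\<dots> = of_nat z * p + of_nat (Suc i - z)"
    using assms(2) by (subst step_kernel_gt) auto
  finally show ?thesis .
qed

lemma transfer_double_step:
  assumes "1 \<le> k"
  shows "transfer (Suc (Suc d)) (2*k-1) x p q = double_step k (\<lambda>z. transfer d (2*k+1) z p q) x p q"
proof -
  have "Suc (2*k-1) = 2*k" "Suc (2*k) = 2*k+1"
    "descent_weight (2*k-1) p q = p" "descent_weight (2*k) p q = q"
    using assms by (simp_all add: descent_weight_def)
  then have "transfer (Suc (Suc d)) (2*k-1) x p q = (\<Sum>y=1..2*k. (if y \<le> x then p else 1) *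
      (\<Sum>z=1..2*k+1. (if z \<le> y then q else 1) * transfer d (2*k+1) z p q))"
    by (simp only: transfer.simps)
  also have "\<dots> = (\<Sum>y=1..2*k. \<Sum>z=1..2*k+1.
      (if y \<le> x then p else 1) * (if z \<le> y then q else 1) * transfer d (2*k+1) z p q)"
    by (simp only: sum_distrib_left mult.assoc)
  also have "\<dots> = (\<Sum>z=1..2*k+1. \<Sum>y=1..2*k.
      (if y \<le> x then p else 1) * (if z \<le> y then q else 1) * transfer d (2*k+1) z p q)"
    by (rule sum.swap)
  also have "\<dots> = double_step k (\<lambda>z. transfer d (2*k+1) z p q) x p q"
    unfolding double_step_def step_kernel_def by (simp add: sum_distrib_right)
  finally show ?thesis .
qed

definition tilde_factor :: "nat \<Rightarrow> 'a::comm_ring_1 \<Rightarrow> 'a" where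
  "tilde_factor n q = (if odd n then 1 else 1+q)"

definition level :: "nat \<Rightarrow> nat \<Rightarrow> nat \<Rightarrow> 'a::comm_ring_1 \<Rightarrow> 'a \<Rightarrow> 'a" where
  "level n k z p q = tilde_factor n q * transfer (n - (2*k+1)) (2*k+1) z p q"

lemma level_double_step:
  assumes "1 \<le> k" "2*k+1 \<le> n"
  shows "level n (k-1) x p q = double_step k (\<lambda>z. level n k z p q) x p q"
proof -
  have "2*(k-1)+1 = 2*k-1" "n - (2*k-1) = Suc (Suc (n - (2*k+1)))" using assms by auto
  then show ?thesis
    unfolding level_def by (simp only: transfer_double_step[OF assms(1)] double_step_scale)
qed

lemma level_top_even:
  assumes "n = 2*m" "1 \<le> m" "z \<le> 2*m"
  shows "level n (m-1) z p q = (1+q) * (of_nat z * p + of_nat (2*m - z))"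
proof -
  have e: "2*(m-1)+1 = 2*m-1" "n - (2*m-1) = Suc 0" "odd n = False" "Suc (2*m-1) = 2*m"
    using assms by auto
  have "level n (m-1) z p q = (1+q) * transfer (Suc 0) (2*m-1) z p q"
    unfolding level_def tilde_factor_def e if_False ..
  also have "transfer (Suc 0) (2*m-1) z p q = of_nat z * p + of_nat (2*m - z)"
    using transfer_1_odd[of "2*m-1" z p q] assms(2,3) by (simp only: e) simp
  finally show ?thesis .
qed

text \<open>The recursion starts at the longest odd length \<open>2 top_level + 1 \<le> n\<close>; for even \<open>n\<close> the
  last (odd) step is done by hand, which is where the factor \<open>1+q\<close> of the tilde-polynomial enters.\<close>

definition top_level :: "nat \<Rightarrow> nat" where
  "top_level n = (n-1) div 2"

definition top_degree :: "nat \<Rightarrow> nat" where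
  "top_degree n = (if odd n then 0 else 1)"

definition top_G :: "nat \<Rightarrow> coeff_family" where
  "top_G n z j = (if odd n then (if j = 0 then 1 else 0) else (if j \<le> 1 then int z else 0))"

definition top_H :: "nat \<Rightarrow> coeff_family" where
  "top_H n z j = (if odd n then 0 else (if j = 0 then int (n - 2*z) else 0))"

fun level_coeffs :: "nat \<Rightarrow> nat \<Rightarrow> coeff_family \<times> coeff_family" where
  "level_coeffs n 0 = (top_G n, top_H n)"
| "level_coeffs n (Suc d) =
    (let k = top_level n - d; N = top_degree n + d; (G, H) = level_coeffs n d
     in (next_G k N G H, next_H k N G H))"

lemma symmetric_form_top:
  fixes p q :: "'a::comm_ring_1"
  assumes "1 \<le> n"
  shows "symmetric_form (\<lambda>z. level n (top_level n) z p q) (top_level n) (top_degree n)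
    (top_G n) (top_H n) p q"
proof (cases "odd n")
  case True
  then obtain m where n: "n = 2*m+1" by (metis oddE)
  then have "top_level n = m" by (simp add: top_level_def)
  then show ?thesis using True unfolding symmetric_form_def
    by (simp add: level_def tilde_factor_def n top_degree_def top_G_def top_H_def
        gamma_expansion_1 gamma_expansion_0)
next
  case False
  then obtain m where n: "n = 2*m" by (metis evenE)
  have m: "1 \<le> m" "top_level n = m - 1" "2 * (m - 1) + 2 = 2*m" "Suc (m - 1) = m"
    using assms n by (auto simp: top_level_def)
  have G: "gamma_expansion (Suc (top_degree n)) (top_G n z) p q =
      of_nat z * (1+p*q) + of_nat z * (p+q)"
    for z using False by (simp add: top_degree_def top_G_def gamma_expansion_2)
  have H: "gamma_expansion (top_degree n) (top_H n z) p q = of_nat (2*m - 2*z)" for z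
    using False by (simp add: top_degree_def top_H_def gamma_expansion_1 n)
  show ?thesis unfolding symmetric_form_def m(2-4)
  proof (intro conjI allI impI)
    fix z assume z: "1 \<le> z \<and> z \<le> m - 1"
    then obtain b where b: "m = z + b" using le_Suc_ex[of z m] by fastforce
    have "2*m - z = z + 2*b" "2*m - (2*m - z) = z" "2*m - 2*z = 2*b" using b by auto
    then show "level n (m-1) z p q = gamma_expansion (Suc (top_degree n)) (top_G n z) p q
          + (1+q) * gamma_expansion (top_degree n) (top_H n z) p q"
      and "level n (m-1) (2*m - z) p q = gamma_expansion (Suc (top_degree n)) (top_G n z) p q
          + p * (1+q) * gamma_expansion (top_degree n) (top_H n z) p q"
      unfolding G H
      using level_top_even[OF n m(1), of z p q] level_top_even[OF n m(1), of "2*m-z" p q]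
      by (simp_all add: algebra_simps b)
  next
    show "level n (m-1) m p q = gamma_expansion (Suc (top_degree n)) (top_G n m) p q"
      unfolding G using level_top_even[OF n m(1), of m p q] by (simp add: algebra_simps mult_2)
  qed
qed

lemma symmetric_form_level:
  fixes p q :: "'a::comm_ring_1"
  assumes "1 \<le> n" "d \<le> top_level n"
  shows "symmetric_form (\<lambda>z. level n (top_level n - d) z p q) (top_level n - d) (top_degree n + d)
    (fst (level_coeffs n d)) (snd (level_coeffs n d)) p q"
  using assms(2)
proof (induction d)
  case 0
  then show ?case using symmetric_form_top[OF assms(1)] by simp
next
  case (Suc d)
  let ?k = "top_level n - d"
  have k: "1 \<le> ?k" "2 * ?k + 1 \<le> n" "?k - 1 = top_level n - Suc d"
    using Suc.prems assms(1) unfolding top_level_def by auto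
  from Suc.prems have "d \<le> top_level n" by simp
  note step = symmetric_form_double_step[OF Suc.IH[OF this] k(1)]
  have "(\<lambda>x. double_step ?k (\<lambda>z. level n ?k z p q) x p q) = (\<lambda>x. level n (?k - 1) x p q)"
    by (intro ext) (rule level_double_step[OF k(1,2), symmetric])
  with step show ?case by (simp add: k(3) split_beta Let_def)
qed

definition gamma_coeff :: "nat \<Rightarrow> nat \<Rightarrow> int" where
  "gamma_coeff n = fst (level_coeffs n (top_level n)) 1"

lemma tilde_factor_transfer:
  fixes p q :: "'a::comm_ring_1"
  assumes "1 \<le> n"
  shows "tilde_factor n q * transfer (n-1) 1 1 p q =
    gamma_expansion (Suc (n div 2)) (gamma_coeff n) p q"
proof -
  have "top_degree n + top_level n = n div 2"
    using assms by (auto simp: top_degree_def top_level_def elim!: oddE evenE)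
  then show ?thesis
    using symmetric_form_level[OF assms order.refl, of p q]
    by (simp add: symmetric_form_def level_def gamma_coeff_def)
qed

section \<open>Appending a last letter\<close>

abbreviation descent_monomial :: "nat list \<Rightarrow> 'a::comm_ring_1 \<Rightarrow> 'a \<Rightarrow> 'a" where
  "descent_monomial xs p q \<equiv> p ^ odes xs * q ^ edes xs"

definition make_room :: "nat \<Rightarrow> nat \<Rightarrow> nat" where
  "make_room v a = (if v \<le> a then Suc a else a)"

definition close_gap :: "nat \<Rightarrow> nat \<Rightarrow> nat" where
  "close_gap v a = (if v < a then a - 1 else a)"

definition append_last :: "nat \<Rightarrow> nat list \<Rightarrow> nat list" where
  "append_last v s = map (make_room v) s @ [v]"

definition remove_last :: "nat list \<Rightarrow> nat list" where
  "remove_last xs = map (close_gap (last xs)) (butlast xs)"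

lemma inj_make_room: "inj (make_room v)"
  by (auto intro!: injI simp: make_room_def split: if_splits)

lemma make_room_neq: "make_room v a \<noteq> v"
  by (auto simp: make_room_def)

lemma make_room_less_iff: "make_room v b < make_room v a \<longleftrightarrow> b < a"
  by (auto simp: make_room_def)

lemma close_gap_make_room: "close_gap v (make_room v a) = a"
  by (auto simp: make_room_def close_gap_def)

lemma make_room_close_gap: "a \<noteq> v \<Longrightarrow> make_room v (close_gap v a) = a"
  by (auto simp: make_room_def close_gap_def)

lemma make_room_image: "1 \<le> v \<Longrightarrow> v \<le> Suc n \<Longrightarrow> make_room v ` {1..n} = {1..Suc n} - {v}"
proof (intro equalityI subsetI)
  fix b assume "b \<in> make_room v ` {1..n}" "1 \<le> v" "v \<le> Suc n"
  then show "b \<in> {1..Suc n} - {v}" by (auto simp: make_room_def)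
next
  fix b assume b: "b \<in> {1..Suc n} - {v}" and v: "1 \<le> v" "v \<le> Suc n"
  show "b \<in> make_room v ` {1..n}"
  proof (cases "b < v")
    case True
    then have "make_room v b = b" "b \<in> {1..n}" using b v by (auto simp: make_room_def)
    then show ?thesis by (metis imageI)
  next
    case False
    then have "make_room v (b - 1) = b" "b - 1 \<in> {1..n}" using b v by (auto simp: make_room_def)
    then show ?thesis by (metis imageI)
  qed
qed

lemma distinct_map_make_room: "distinct (map (make_room v) s) \<longleftrightarrow> distinct s"
  by (simp add: distinct_map inj_on_subset[OF inj_make_room subset_UNIV])

lemma append_last_permutation:
  assumes s: "s \<in> permutations_of_set {1..n}" and v: "1 \<le> v" "v \<le> Suc n"
  shows "append_last v s \<in> permutations_of_set {1..Suc n}"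
proof
  have s: "set s = {1..n}" "distinct s" using s by (auto dest: permutations_of_setD)
  then show "set (append_last v s) = {1..Suc n}"
    using make_room_image[OF v] v by (auto simp: append_last_def)
  show "distinct (append_last v s)"
    using s by (auto simp: append_last_def distinct_map_make_room make_room_neq[symmetric])
qed

lemma remove_last_permutation:
  assumes xs: "xs \<in> permutations_of_set {1..Suc n}"
  shows "remove_last xs \<in> permutations_of_set {1..n}" "append_last (last xs) (remove_last xs) = xs"
proof -
  let ?v = "last xs"
  have xs: "set xs = {1..Suc n}" "distinct xs" using xs by (auto dest: permutations_of_setD)
  then have "xs \<noteq> []" by auto
  then have split: "xs = butlast xs @ [?v]" and v: "?v \<in> {1..Suc n}"
    using xs last_in_set by auto
  have "distinct (butlast xs @ [?v])" using xs split by metis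
  then have v_notin: "?v \<notin> set (butlast xs)" and dist: "distinct (butlast xs)" by auto
  have "set xs = set (butlast xs) \<union> {?v}" by (subst split) simp
  then have set_butlast: "set (butlast xs) = {1..Suc n} - {?v}" using xs v_notin by auto
  have butlast: "map (make_room ?v) (remove_last xs) = butlast xs"
    unfolding remove_last_def map_map comp_def by (rule map_idI) (metis make_room_close_gap v_notin)
  then show "append_last ?v (remove_last xs) = xs"
    unfolding append_last_def using split by simp
  have "make_room ?v ` set (remove_last xs) = make_room ?v ` {1..n}"
    using butlast set_butlast make_room_image v by (metis atLeastAtMost_iff set_map)
  then have "set (remove_last xs) = {1..n}"
    using inj_make_room by (simp add: inj_image_eq_iff)
  moreover have "distinct (remove_last xs)"
    using butlast dist distinct_map_make_room by metis
  ultimately show "remove_last xs \<in> permutations_of_set {1..n}" by blast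
qed

lemma bij_betw_append_last:
  assumes "1 \<le> v" "v \<le> Suc n"
  shows "bij_betw (append_last v) (permutations_of_set {1..n})
    {xs \<in> permutations_of_set {1..Suc n}. last xs = v}"
proof (rule bij_betw_byWitness[where f'=remove_last])
  let ?T = "{xs \<in> permutations_of_set {1..Suc n}. last xs = v}"
  show "\<forall>s \<in> permutations_of_set {1..n}. remove_last (append_last v s) = s"
    by (simp add: remove_last_def append_last_def map_idI close_gap_make_room comp_def)
  show "\<forall>xs \<in> ?T. append_last v (remove_last xs) = xs"
    using remove_last_permutation(2) by blast
  show "append_last v ` permutations_of_set {1..n} \<subseteq> ?T"
    using append_last_permutation[OF _ assms] by (auto simp: append_last_def)
  show "remove_last ` ?T \<subseteq> permutations_of_set {1..n}"
    using remove_last_permutation(1) by blast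
qed

lemma descents_subset: "descents xs \<subseteq> {1..<length xs}"
  by (auto simp: descents_def)

lemma finite_descents [simp]: "finite (descents xs)"
  by (rule finite_subset[OF descents_subset]) simp

lemma descents_append_last:
  assumes "length s = n" "1 \<le> n"
  shows "descents (append_last v s) = descents s \<union> (if v \<le> last s then {n} else {})"
proof (rule set_eqI)
  fix i
  have len: "length (append_last v s) = Suc n" using assms by (simp add: append_last_def)
  have last: "last s = s ! (n-1)" using assms by (subst last_conv_nth) auto
  show "i \<in> descents (append_last v s) \<longleftrightarrow> i \<in> descents s \<union> (if v \<le> last s then {n} else {})"
  proof (cases "1 \<le> i \<and> i < n")
    case True
    then have "append_last v s ! (i-1) = make_room v (s ! (i-1))"
      "append_last v s ! i = make_room v (s ! i)"
      using assms by (auto simp: append_last_def nth_append)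
    then show ?thesis using True assms len by (auto simp: descents_def make_room_less_iff)
  next
    case outside: False
    show ?thesis
    proof (cases "i = n")
      case True
      then have "append_last v s ! (i-1) = make_room v (s ! (n-1))" "append_last v s ! i = v"
        using assms by (auto simp: append_last_def nth_append)
      moreover have "make_room v a > v \<longleftrightarrow> v \<le> a" for a by (auto simp: make_room_def)
      ultimately show ?thesis using True assms len last by (auto simp: descents_def)
    next
      case False
      then show ?thesis using outside len assms by (auto simp: descents_def)
    qed
  qed
qed

lemma descent_monomial_append_last:
  fixes p q :: "'a::comm_ring_1"
  assumes "length s = n" "1 \<le> n"
  shows "descent_monomial (append_last v s) p q =
    (if v \<le> last s then descent_weight n p q else 1) * descent_monomial s p q"
proof (cases "v \<le> last s")
  case False
  then show ?thesis using descents_append_last[OF assms, of v] by (simp add: odes_def edes_def)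
next
  case True
  have new: "n \<notin> descents s" using descents_subset[of s] assms by auto
  have D: "descents (append_last v s) = insert n (descents s)"
    using descents_append_last[OF assms, of v] True by auto
  show ?thesis
  proof (cases "odd n")
    case True
    then have "{i \<in> descents (append_last v s). odd i} = insert n {i \<in> descents s. odd i}"
      "{i \<in> descents (append_last v s). even i} = {i \<in> descents s. even i}"
      using D by auto
    then show ?thesis
      using new True \<open>v \<le> last s\<close> by (simp add: odes_def edes_def descent_weight_def)
  next
    case False
    then have "{i \<in> descents (append_last v s). odd i} = {i \<in> descents s. odd i}"
      "{i \<in> descents (append_last v s). even i} = insert n {i \<in> descents s. even i}"
      using D by auto
    then show ?thesis
      using new False \<open>v \<le> last s\<close> by (simp add: odes_def edes_def descent_weight_def mult_ac)
  qed
qed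

definition A_last :: "nat \<Rightarrow> nat \<Rightarrow> 'a::comm_ring_1 \<Rightarrow> 'a \<Rightarrow> 'a" where
  "A_last n v p q = (\<Sum>xs \<in> {xs \<in> permutations_of_set {1..n}. last xs = v}. descent_monomial xs p q)"

lemma sum_permutations_by_last:
  fixes n :: nat
  assumes "1 \<le> n"
  shows "(\<Sum>xs \<in> permutations_of_set {1..n}. h xs) =
    (\<Sum>v=1..n. \<Sum>xs \<in> {xs \<in> permutations_of_set {1..n}. last xs = v}. h xs)"
proof -
  have "last xs \<in> {1..n}" if "xs \<in> permutations_of_set {1..n}" for xs
  proof -
    have "1 \<in> set xs" using permutations_of_setD(1)[OF that] assms by simp
    then have "xs \<noteq> []" by auto
    then show ?thesis using last_in_set permutations_of_setD(1)[OF that] by blast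
  qed
  then show ?thesis using sum.group[of "permutations_of_set {1..n}" "{1..n}" last h] by force
qed

lemma A_poly_eq_sum_A_last: "1 \<le> n \<Longrightarrow> A_poly n p q = (\<Sum>v=1..n. A_last n v p q)"
  unfolding A_poly_def A_last_def by (rule sum_permutations_by_last)

lemma A_last_Suc:
  fixes p q :: "'a::comm_ring_1"
  assumes n: "1 \<le> n" and v: "1 \<le> v" "v \<le> Suc n"
  shows "A_last (Suc n) v p q =
    (\<Sum>u=1..n. (if v \<le> u then descent_weight n p q else 1) * A_last n u p q)"
proof -
  let ?w = "\<lambda>u. if v \<le> u then descent_weight n p q else 1"
  have "A_last (Suc n) v p q =
      (\<Sum>s \<in> permutations_of_set {1..n}. descent_monomial (append_last v s) p q)"
    unfolding A_last_def
    using sum.reindex_bij_betw[OF bij_betw_append_last[OF v], of "\<lambda>xs. descent_monomial xs p q"]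
    by (rule sym)
  also have "\<dots> = (\<Sum>s \<in> permutations_of_set {1..n}. ?w (last s) * descent_monomial s p q)"
  proof (rule sum.cong[OF refl])
    fix s assume "s \<in> permutations_of_set {1..n}"
    then have "length s = n" using length_finite_permutations_of_set by fastforce
    then show "descent_monomial (append_last v s) p q = ?w (last s) * descent_monomial s p q"
      using descent_monomial_append_last n by blast
  qed
  also have "\<dots> = (\<Sum>u=1..n. \<Sum>s \<in> {xs \<in> permutations_of_set {1..n}. last xs = u}.
      ?w (last s) * descent_monomial s p q)"
    by (rule sum_permutations_by_last[OF n])
  also have "\<dots> = (\<Sum>u=1..n. ?w u * A_last n u p q)"
    unfolding A_last_def sum_distrib_left by (intro sum.cong refl) auto
  finally show ?thesis .
qed

lemma A_last_1: "A_last 1 1 p q = 1"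
proof -
  have "{xs \<in> permutations_of_set {1..1::nat}. last xs = 1} = {[1]}"
    by auto
  moreover have "descents [1] = {}" by (simp add: descents_def)
  ultimately show ?thesis unfolding A_last_def odes_def edes_def by simp
qed

lemma A_poly_eq_transfer_gen:
  fixes p q :: "'a::comm_ring_1"
  assumes "d < n"
  shows "A_poly n p q = (\<Sum>x=1..n-d. A_last (n-d) x p q * transfer d (n-d) x p q)"
  using assms
proof (induction d)
  case 0
  then show ?case using A_poly_eq_sum_A_last[of n p q] by simp
next
  case (Suc d)
  let ?i = "n - Suc d" and ?w = "\<lambda>x y. if y \<le> x then descent_weight (n - Suc d) p q else 1"
  have i: "1 \<le> ?i" "n - d = Suc ?i" using Suc.prems by auto
  have "A_poly n p q = (\<Sum>y=1..Suc ?i. A_last (Suc ?i) y p q * transfer d (Suc ?i) y p q)"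
    using Suc i by simp
  also have "\<dots> = (\<Sum>y=1..Suc ?i. \<Sum>x=1..?i. ?w x y * A_last ?i x p q * transfer d (Suc ?i) y p q)"
    by (intro sum.cong refl) (simp add: A_last_Suc[OF i(1)] sum_distrib_right)
  also have "\<dots> = (\<Sum>x=1..?i. \<Sum>y=1..Suc ?i. ?w x y * A_last ?i x p q * transfer d (Suc ?i) y p q)"
    by (rule sum.swap)
  also have "\<dots> = (\<Sum>x=1..?i. A_last ?i x p q * transfer (Suc d) ?i x p q)"
    by (simp only: transfer.simps sum_distrib_left) (intro sum.cong refl, simp add: mult_ac)
  finally show ?case .
qed

lemma A_poly_eq_transfer: "1 \<le> n \<Longrightarrow> A_poly n p q = transfer (n-1) 1 1 p q"
  using A_poly_eq_transfer_gen[of "n-1" n p q] A_last_1[of p q] by simp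

lemma A_tilde_gamma_expansion:
  fixes p q :: "'a::comm_ring_1"
  assumes "1 \<le> n"
  shows "A_tilde n p q = gamma_expansion (Suc (n div 2)) (gamma_coeff n) p q"
  using tilde_factor_transfer[OF assms, of q p] A_poly_eq_transfer[OF assms, of p q]
  by (auto simp: A_tilde_def tilde_factor_def)

section \<open>Identification and positivity of the coefficients\<close>

lemma odes_le:
  assumes "xs \<in> permutations_of_set {1..n}"
  shows "odes xs \<le> n"
proof -
  have "odes xs \<le> card (descents xs)" unfolding odes_def by (rule card_mono) auto
  also have "\<dots> \<le> card {1..<length xs}" by (rule card_mono[OF _ descents_subset]) simp
  also have "\<dots> \<le> n" using length_finite_permutations_of_set[OF assms] by simp
  finally show ?thesis .
qed

lemma A_poly_X_zero:
  "A_poly n [:0, 1:] 0 = (\<Sum>j\<le>n. monom (int (c_coef n j)) j)"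
proof -
  let ?P = "permutations_of_set {1..n}"
  let ?S = "{xs \<in> ?P. edes xs = 0}"
  have "A_poly n [:0, 1:] (0 :: int poly) =
      (\<Sum>xs \<in> ?P. if edes xs = 0 then monom 1 (odes xs) else 0)"
    unfolding A_poly_def by (intro sum.cong refl) (simp add: monom_altdef)
  also have "\<dots> = (\<Sum>xs \<in> ?S. monom 1 (odes xs))"
    by (simp add: sum.inter_filter)
  also have "\<dots> = (\<Sum>j\<le>n. \<Sum>xs \<in> {xs \<in> ?S. odes xs = j}. monom 1 (odes xs))"
    by (rule sum.group[symmetric]) (auto intro: odes_le)
  also have "\<dots> = (\<Sum>j\<le>n. monom (int (c_coef n j)) j)"
  proof (rule sum.cong[OF refl])
    fix j
    have "{xs \<in> ?S. odes xs = j} = {xs \<in> ?P. odes xs = j \<and> edes xs = 0}" by auto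
    then show "(\<Sum>xs \<in> {xs \<in> ?S. odes xs = j}. monom 1 (odes xs)) = monom (int (c_coef n j)) j"
      by (simp add: c_coef_def of_nat_poly smult_monom)
  qed
  finally show ?thesis .
qed

lemma gamma_coeff_eq_c_coef:
  assumes n: "1 \<le> n" and j: "j \<le> n div 2"
  shows "gamma_coeff n j = int (c_coef n j)"
proof -
  have "(\<Sum>i\<le>n div 2. monom (gamma_coeff n i) i) = A_tilde n [:0, 1:] (0 :: int poly)"
    unfolding A_tilde_gamma_expansion[OF n] gamma_expansion_def lessThan_Suc_atMost
    by (simp add: monom_altdef of_int_poly)
  also have "\<dots> = (\<Sum>i\<le>n. monom (int (c_coef n i)) i)"
    by (simp add: A_tilde_def A_poly_X_zero)
  finally have "coeff (\<Sum>i\<le>n div 2. monom (gamma_coeff n i) i) j =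
      coeff (\<Sum>i\<le>n. monom (int (c_coef n i)) i) j"
    by simp
  then show ?thesis using j by (simp add: coeff_sum_monom)
qed

definition swap_pairs :: "nat \<Rightarrow> nat \<Rightarrow> nat" where
  "swap_pairs j y = (if y \<le> 2*j then (if odd y then y+1 else y-1) else y)"

lemma swap_pairs_range: "2*j \<le> n \<Longrightarrow> y \<in> {1..n} \<Longrightarrow> swap_pairs j y \<in> {1..n}"
  unfolding swap_pairs_def by (auto; presburger)

lemma swap_pairs_swap_pairs: "1 \<le> y \<Longrightarrow> swap_pairs j (swap_pairs j y) = y"
  unfolding swap_pairs_def by (auto; presburger)

lemma swap_pairs_descent_iff:
  "1 \<le> i \<Longrightarrow> swap_pairs j i > swap_pairs j (Suc i) \<longleftrightarrow> odd i \<and> i < 2*j"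
  unfolding swap_pairs_def by (auto; presburger)

lemma bij_betw_swap_pairs: "2*j \<le> n \<Longrightarrow> bij_betw (swap_pairs j) {1..n} {1..n}"
  by (rule bij_betw_byWitness[where f'="swap_pairs j"])
    (use swap_pairs_range[of j n] in \<open>auto simp: swap_pairs_swap_pairs\<close>)

lemma card_odd_less: "card {i::nat. odd i \<and> i < 2*j} = j"
proof -
  have "{i::nat. odd i \<and> i < 2*j} = (\<lambda>l. 2*l+1) ` {..<j}"
    by (auto elim!: oddE)
  moreover have "inj_on (\<lambda>l::nat. 2*l+1) {..<j}" by (auto intro: inj_onI)
  ultimately show ?thesis by (simp add: card_image)
qed

definition pairs_swapped :: "nat \<Rightarrow> nat \<Rightarrow> nat list" where
  "pairs_swapped n j = map (swap_pairs j) [1..<n+1]"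

lemma pairs_swapped_permutation:
  "2*j \<le> n \<Longrightarrow> pairs_swapped n j \<in> permutations_of_set {1..n}"
  using bij_betw_swap_pairs[of j n]
  by (auto simp: pairs_swapped_def bij_betw_def distinct_map atLeastLessThanSuc_atLeastAtMost
      simp del: upt_Suc)

lemma nth_pairs_swapped: "k < n \<Longrightarrow> pairs_swapped n j ! k = swap_pairs j (Suc k)"
  by (simp add: pairs_swapped_def del: upt_Suc)

lemma descents_pairs_swapped:
  assumes "2*j \<le> n"
  shows "descents (pairs_swapped n j) = {i. odd i \<and> i < 2*j}"
proof (rule set_eqI)
  fix i
  have len: "length (pairs_swapped n j) = n" by (simp add: pairs_swapped_def)
  show "i \<in> descents (pairs_swapped n j) \<longleftrightarrow> i \<in> {i. odd i \<and> i < 2*j}"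
  proof (cases "1 \<le> i \<and> i < n")
    case True
    then have "pairs_swapped n j ! (i-1) = swap_pairs j i"
      "pairs_swapped n j ! i = swap_pairs j (Suc i)"
      using nth_pairs_swapped[of "i-1" n j] nth_pairs_swapped[of i n j] by auto
    then show ?thesis using True swap_pairs_descent_iff[of i j] len by (auto simp: descents_def)
  next
    case False
    then show ?thesis using assms len by (cases "i = 0") (auto simp: descents_def)
  qed
qed

lemma c_coef_pos:
  assumes "j \<le> n div 2"
  shows "c_coef n j > 0"
proof -
  have j: "2*j \<le> n" using assms by simp
  have "odes (pairs_swapped n j) = j"
    unfolding odes_def descents_pairs_swapped[OF j] using card_odd_less[of j]
    by (simp add: conj_commute)
  moreover have "edes (pairs_swapped n j) = 0"
    unfolding edes_def descents_pairs_swapped[OF j] by simp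
  ultimately have "pairs_swapped n j \<in> {xs \<in> permutations_of_set {1..n}. odes xs = j \<and> edes xs = 0}"
    using pairs_swapped_permutation[OF j] by simp
  then show ?thesis unfolding c_coef_def by (auto simp: card_gt_0_iff)
qed

theorem mainTheorem5:
  fixes n :: nat
  assumes "n \<ge> 1"
  shows "(\<forall>(p::'a::comm_ring_1) q. A_tilde n p q =
            (\<Sum>j = 0..n div 2. of_nat (c_coef n j) * (p + q) ^ j * (1 + p * q) ^ (n div 2 - j)))
         \<and> (\<forall>j \<le> n div 2. c_coef n j > 0)"
proof (intro conjI allI impI)
  fix p q :: 'a
  have "A_tilde n p q = gamma_expansion (Suc (n div 2)) (gamma_coeff n) p q"
    by (rule A_tilde_gamma_expansion[OF assms])
  also have "\<dots> = (\<Sum>j = 0..n div 2. of_nat (c_coef n j) * (p + q) ^ j * (1 + p * q) ^ (n div 2 - j))"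
    unfolding gamma_expansion_def lessThan_Suc_atMost atLeast0AtMost
    by (intro sum.cong refl) (simp add: gamma_coeff_eq_c_coef[OF assms])
  finally show "A_tilde n p q =
    (\<Sum>j = 0..n div 2. of_nat (c_coef n j) * (p + q) ^ j * (1 + p * q) ^ (n div 2 - j))" .
next
  fix j :: nat
  assume "j \<le> n div 2"
  then show "c_coef n j > 0" by (rule c_coef_pos)
qed

end
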